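(* Let $\mathfrak{R}=(G,G',S,\phi,\rho,\delta)$ be an optimal reconciliation. Then $\Delta(\mathfrak{R})\subseteq V(G)$.
   Context: All trees are rooted binary trees whose root node has degree 1; every other non-leaf node $x$ has exactly two children $x_l,x_r$. $G$ is a gene tree, $S$ a species tree, $\phi:L(G)\to L(S)$. A tree $G'$ is an extension of $G$ if $G$ is obtained from $G'$ by pruning some subtrees and suppressing degree-2 nodes; $V(G)\subseteq V(G')$. A map $\rho:V(G')\to V(S)$ is consistent with $S$ if $\rho(root(G'))=root(S)$ and every node $x$ of $G'$ with two children satisfies (D) $\rho(x)=\rho(x_l)=\rho(x_r)$ or (S) $\rho(x)_l=\rho(x_l)$ and $\rho(x)_r=\rho(x_r)$. A reconciliation $\mathfrak{R}=(G,G',S,\phi,\rho,\delta)$ consists of an extension $G'$ of $G$, a consistent $\rho$ with $\rho|_{L(G)}=\phi$, and an injective partial function $\delta:\Delta\to\Lambda$ with $\rho(x)=\rho(\delta(x))$, where $\Delta=\Delta(\mathfrak{R})$ (duplications) is the set of nodes with two children satisfying (D) and $\Lambda=L(G')\setminus L(G)$ (losses); $\Delta'$ is the domain and $\Lambda'$ the image of $\delta$. Cost $\omega(\mathfrak{R})=|\Lambda\setminus\Lambda'|+|\Delta\setminus\Delta'|+|\Delta'|$; $\mathfrak{R}$ is optimal if it minimizes $\omega$ among all reconciliations for the given $G,S,\phi$. *)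

theory Defs
  imports Main
begin

record 'v rtree =
  nodes :: "'v set"
  root :: 'v
  edges :: "('v \<times> 'v) set"

definition children :: "'v rtree \<Rightarrow> 'v \<Rightarrow> 'v set" where
  "children T x = {y. (x, y) \<in> edges T}"

definition leaves :: "'v rtree \<Rightarrow> 'v set" where
  "leaves T = {x \<in> nodes T. children T x = {}}"

definition is_rooted_tree :: "'v rtree \<Rightarrow> bool" where
  "is_rooted_tree T \<longleftrightarrow>
     finite (nodes T) \<and> root T \<in> nodes T \<and> edges T \<subseteq> nodes T \<times> nodes T \<and>
     (\<forall>x. (x, root T) \<notin> edges T) \<and>
     (\<forall>y \<in> nodes T. y \<noteq> root T \<longrightarrow> (\<exists>!x. (x, y) \<in> edges T)) \<and>
     (\<forall>y \<in> nodes T. (root T, y) \<in> (edges T)\<^sup>*)"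

definition planted_binary :: "'v rtree \<Rightarrow> bool" where
  "planted_binary T \<longleftrightarrow> is_rooted_tree T \<and>
     card (children T (root T)) = 1 \<and>
     (\<forall>x \<in> nodes T. x \<noteq> root T \<longrightarrow> children T x = {} \<or> card (children T x) = 2)"

text \<open>G' is an extension of G: G arises from G' by pruning some subtrees (the remaining
  node set R is closed under taking parents and contains the root) and suppressing the
  remaining degree-2 nodes (non-root nodes with exactly one remaining child).\<close>
definition extension :: "'v rtree \<Rightarrow> 'v rtree \<Rightarrow> bool" where
  "extension G' G \<longleftrightarrow> planted_binary G' \<and> planted_binary G \<and>
     (\<exists>R. root G' \<in> R \<and> R \<subseteq> nodes G' \<and>
          (\<forall>x y. (x, y) \<in> edges G' \<and> y \<in> R \<longrightarrow> x \<in> R) \<and>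
          nodes G = {x \<in> R. x = root G' \<or> card (children G' x \<inter> R) \<noteq> 1} \<and>
          root G = root G' \<and>
          edges G = {(x, y). x \<in> nodes G \<and> y \<in> nodes G \<and> x \<noteq> y \<and> (x, y) \<in> (edges G')\<^sup>* \<and>
                      (\<forall>z \<in> nodes G. (x, z) \<in> (edges G')\<^sup>* \<and> (z, y) \<in> (edges G')\<^sup>* \<longrightarrow>
                                      z = x \<or> z = y)})"

text \<open>Consistency of rho: V(G') -> V(S) with S.  Condition (S) is read with the children
  of x matched to the children of rho(x) in some order.\<close>
definition cond_D :: "'v rtree \<Rightarrow> ('v \<Rightarrow> 's) \<Rightarrow> 'v \<Rightarrow> bool" where
  "cond_D G' \<rho> x \<longleftrightarrow> (\<forall>c \<in> children G' x. \<rho> c = \<rho> x)"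

definition cond_S :: "'v rtree \<Rightarrow> 's rtree \<Rightarrow> ('v \<Rightarrow> 's) \<Rightarrow> 'v \<Rightarrow> bool" where
  "cond_S G' S \<rho> x \<longleftrightarrow> card (children S (\<rho> x)) = 2 \<and> \<rho> ` children G' x = children S (\<rho> x)"

definition consistent :: "'v rtree \<Rightarrow> 's rtree \<Rightarrow> ('v \<Rightarrow> 's) \<Rightarrow> bool" where
  "consistent G' S \<rho> \<longleftrightarrow> \<rho> ` nodes G' \<subseteq> nodes S \<and> \<rho> (root G') = root S \<and>
     (\<forall>x \<in> nodes G'. card (children G' x) = 2 \<longrightarrow> cond_D G' \<rho> x \<or> cond_S G' S \<rho> x)"

definition dups :: "'v rtree \<Rightarrow> ('v \<Rightarrow> 's) \<Rightarrow> 'v set" where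
  "dups G' \<rho> = {x \<in> nodes G'. card (children G' x) = 2 \<and> cond_D G' \<rho> x}"

definition losses :: "'v rtree \<Rightarrow> 'v rtree \<Rightarrow> 'v set" where
  "losses G G' = leaves G' - leaves G"

definition reconciliation ::
  "'v rtree \<Rightarrow> 'v rtree \<Rightarrow> 's rtree \<Rightarrow> ('v \<Rightarrow> 's) \<Rightarrow> ('v \<Rightarrow> 's) \<Rightarrow> ('v \<Rightarrow> 'v option) \<Rightarrow> bool" where
  "reconciliation G G' S \<phi> \<rho> \<delta> \<longleftrightarrow>
     planted_binary G \<and> planted_binary S \<and> \<phi> ` leaves G \<subseteq> leaves S \<and>
     extension G' G \<and> consistent G' S \<rho> \<and> (\<forall>x \<in> leaves G. \<rho> x = \<phi> x) \<and>
     dom \<delta> \<subseteq> dups G' \<rho> \<and> ran \<delta> \<subseteq> losses G G' \<and> inj_on \<delta> (dom \<delta>) \<and>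
     (\<forall>x \<in> dom \<delta>. \<rho> x = \<rho> (the (\<delta> x)))"

definition rcost :: "'v rtree \<Rightarrow> 'v rtree \<Rightarrow> ('v \<Rightarrow> 's) \<Rightarrow> ('v \<Rightarrow> 'v option) \<Rightarrow> nat" where
  "rcost G G' \<rho> \<delta> =
     card (losses G G' - ran \<delta>) + card (dups G' \<rho> - dom \<delta>) + card (dom \<delta>)"

definition optimal_reconciliation ::
  "'v rtree \<Rightarrow> 'v rtree \<Rightarrow> 's rtree \<Rightarrow> ('v \<Rightarrow> 's) \<Rightarrow> ('v \<Rightarrow> 's) \<Rightarrow> ('v \<Rightarrow> 'v option) \<Rightarrow> bool" where
  "optimal_reconciliation G G' S \<phi> \<rho> \<delta> \<longleftrightarrow>
     reconciliation G G' S \<phi> \<rho> \<delta> \<and>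
     (\<forall>G2 \<rho>2 \<delta>2. reconciliation G G2 S \<phi> \<rho>2 \<delta>2 \<longrightarrow> rcost G G' \<rho> \<delta> \<le> rcost G G2 \<rho>2 \<delta>2)"

end

theory Submission
  imports Defs
begin

text \<open>The cost equals |\<Lambda>| + |\<Delta>| - |\<Delta>'|.  Suppose a duplication x of G' is not a node of G.
  Then x is pruned or suppressed, so one child c of x has its whole subtree pruned, and the other
  child d is kept iff x is.  If x is unpaired, or paired with a loss below c, delete x together
  with the subtree of c and attach d to the parent of x: every destroyed pair has an end among the
  deleted nodes, and x is either unpaired or has both ends deleted, so more duplications and
  losses vanish than pairs.  Otherwise x is paired with a loss l outside the subtree of c (and, if
  d is pruned, by symmetry outside that of d); then delete x and l, attach d to the parent of x
  and put the subtree of c in place of l, which removes exactly one duplication, one loss and the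
  pair between them.  Both surgeries keep the kept nodes and their ancestry, so they yield cheaper
  reconciliations of G.\<close>

section \<open>Rooted trees and paths\<close>

lemma rooted_treeD:
  assumes "is_rooted_tree T"
  shows "finite (nodes T)" "root T \<in> nodes T" "edges T \<subseteq> nodes T \<times> nodes T"
    "(w, root T) \<notin> edges T"
    "y \<in> nodes T \<Longrightarrow> y \<noteq> root T \<Longrightarrow> \<exists>!w. (w, y) \<in> edges T"
    "y \<in> nodes T \<Longrightarrow> (root T, y) \<in> (edges T)\<^sup>*"
  using assms unfolding is_rooted_tree_def by blast+

lemma rooted_tree_parent_unique:
  assumes "is_rooted_tree T" "(w1, y) \<in> edges T" "(w2, y) \<in> edges T"
  shows "w1 = w2"
proof -
  have "y \<in> nodes T" using assms rooted_treeD(3)[OF assms(1)] by blast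
  moreover have "y \<noteq> root T" using assms rooted_treeD(4)[OF assms(1)] by blast
  ultimately show ?thesis using rooted_treeD(5)[OF assms(1)] assms by blast
qed

lemma rooted_tree_acyclic:
  assumes T: "is_rooted_tree T"
  shows "(y, y) \<notin> (edges T)\<^sup>+"
proof
  assume cyc: "(y, y) \<in> (edges T)\<^sup>+"
  have "y \<in> nodes T" using cyc rooted_treeD(3)[OF T] by (meson SigmaD2 subsetD tranclE)
  hence "(root T, y) \<in> (edges T)\<^sup>*" using rooted_treeD(6)[OF T] by blast
  hence "(y, y) \<notin> (edges T)\<^sup>+"
  proof (induction rule: rtrancl_induct)
    case base
    show ?case using rooted_treeD(4)[OF T] by (meson tranclE)
  next
    case (step y z)
    show ?case
    proof
      assume "(z, z) \<in> (edges T)\<^sup>+"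
      then obtain w where w: "(z, w) \<in> (edges T)\<^sup>*" "(w, z) \<in> edges T"
        by (meson tranclE trancl_into_rtrancl)
      have "w = y" using rooted_tree_parent_unique[OF T w(2) step(2)] .
      hence "(y, y) \<in> (edges T)\<^sup>+" using step(2) w(1) by (meson rtrancl_into_trancl2)
      thus False using step(3) by blast
    qed
  qed
  thus False using cyc by blast
qed

text \<open>Paths survive when a downward closed set B is cut away and a node x, whose children
  lie in B except for d, is spliced out by an edge from its parent p to d.\<close>
lemma rtrancl_splice:
  assumes path: "(a, y) \<in> E\<^sup>*" and yB: "y \<notin> B" "y \<noteq> x" and aB: "a \<notin> B" "a \<noteq> x"
    and par: "\<And>w. (w, x) \<in> E \<Longrightarrow> w = p" and pB: "p \<notin> B" "p \<noteq> x"
    and down: "\<And>u v. (u, v) \<in> E \<Longrightarrow> u \<in> B \<Longrightarrow> v \<in> B"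
    and xch: "\<And>z. (x, z) \<in> E \<Longrightarrow> z \<in> B \<or> z = d"
    and pd: "(p, d) \<in> E2"
    and keep: "\<And>u v. (u, v) \<in> E \<Longrightarrow> u \<notin> B \<Longrightarrow> v \<notin> B \<Longrightarrow> u \<noteq> x \<Longrightarrow> v \<noteq> x \<Longrightarrow> (u, v) \<in> E2"
  shows "(a, y) \<in> E2\<^sup>*"
proof -
  have "y \<notin> B \<longrightarrow> (y \<noteq> x \<longrightarrow> (a, y) \<in> E2\<^sup>*) \<and> (y = x \<longrightarrow> (a, p) \<in> E2\<^sup>*)"
    using path
  proof (induction rule: rtrancl_induct)
    case base
    then show ?case using aB by auto
  next
    case (step y z)
    show ?case
    proof
      assume zB: "z \<notin> B"
      have yB': "y \<notin> B" using down step(2) zB by blast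
      show "(z \<noteq> x \<longrightarrow> (a, z) \<in> E2\<^sup>*) \<and> (z = x \<longrightarrow> (a, p) \<in> E2\<^sup>*)"
      proof (cases "z = x")
        case True
        then have "y = p" using par step(2) by blast
        then show ?thesis using step(3) yB' pB True by auto
      next
        case False
        show ?thesis
        proof (cases "y = x")
          case True
          then have "z = d" using xch step(2) zB by blast
          then show ?thesis using step(3) yB' True pd False
            by (meson rtrancl.rtrancl_into_rtrancl)
        next
          case False2: False
          then have "(y, z) \<in> E2" using keep step(2) yB' zB False by blast
          then show ?thesis using step(3) yB' False False2
            by (meson rtrancl.rtrancl_into_rtrancl)
        qed
      qed
    qed
  qed
  thus ?thesis using yB by blast
qed

lemma rtrancl_simulated:
  assumes "(a, y) \<in> E2\<^sup>*" "y \<notin> B"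
    and sim: "\<And>u v. (u, v) \<in> E2 \<Longrightarrow> v \<notin> B \<Longrightarrow> (u, v) \<in> E\<^sup>* \<and> u \<notin> B"
  shows "(a, y) \<in> E\<^sup>*"
proof -
  have "y \<notin> B \<longrightarrow> (a, y) \<in> E\<^sup>*" using assms(1)
  proof (induction rule: rtrancl_induct)
    case base then show ?case by simp
  next
    case (step y z)
    then show ?case using sim by (meson rtrancl_trans)
  qed
  thus ?thesis using assms(2) by blast
qed

lemma rtrancl_mono_from:
  assumes "(c, y) \<in> E\<^sup>*" and "\<And>u v. (c, u) \<in> E\<^sup>* \<Longrightarrow> (u, v) \<in> E \<Longrightarrow> (u, v) \<in> E2"
  shows "(c, y) \<in> E2\<^sup>*"
  using assms(1)
proof (induction rule: rtrancl_induct)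
  case base then show ?case by simp
next
  case (step y z) then show ?case using assms(2) by (meson rtrancl.rtrancl_into_rtrancl)
qed

lemma card_swap_element:
  assumes "finite A" "a \<in> A" "b \<notin> A"
  shows "card (A - {a} \<union> {b}) = card A"
proof -
  have "card A > 0" using assms card_gt_0_iff by blast
  thus ?thesis using assms by (simp add: card_insert_if)
qed

lemma image_swap_element:
  assumes "a \<in> A" "f b = f a"
  shows "f ` (A - {a} \<union> {b}) = f ` A"
  using assms by auto

lemma card_partial_injection:
  assumes "finite L" "finite D" "ran \<delta> \<subseteq> L" "dom \<delta> \<subseteq> D" "inj_on \<delta> (dom \<delta>)"
  shows "card (L - ran \<delta>) + card (D - dom \<delta>) + card (dom \<delta>) + card (dom \<delta>) = card L + card D"
proof -
  have ran_eq: "ran \<delta> = (\<lambda>y. the (\<delta> y)) ` dom \<delta>"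
    unfolding ran_def dom_def by force
  have inj: "inj_on (\<lambda>y. the (\<delta> y)) (dom \<delta>)"
    using assms(5) unfolding inj_on_def dom_def by (metis (mono_tags, lifting) mem_Collect_eq option.collapse)
  have fd: "finite (dom \<delta>)" using assms(2,4) finite_subset by blast
  have cr: "card (ran \<delta>) = card (dom \<delta>)" using ran_eq inj card_image by metis
  have fr: "finite (ran \<delta>)" using assms(1,3) finite_subset by blast
  have "card (L - ran \<delta>) = card L - card (ran \<delta>)" using card_Diff_subset[OF fr assms(3)] .
  moreover have "card (D - dom \<delta>) = card D - card (dom \<delta>)" using card_Diff_subset[OF fd assms(4)] .
  moreover have "card (ran \<delta>) \<le> card L" using card_mono[OF assms(1,3)] .
  moreover have "card (dom \<delta>) \<le> card D" using card_mono[OF assms(2,4)] .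
  ultimately show ?thesis using cr by linarith
qed

lemma rcost_reconciliation:
  assumes rec: "reconciliation G G' S \<phi> \<rho> \<delta>"
  shows "rcost G G' \<rho> \<delta> + card (dom \<delta>) = card (losses G G') + card (dups G' \<rho>)"
proof -
  have "extension G' G" using rec by (simp add: reconciliation_def)
  hence "is_rooted_tree G'" by (simp add: extension_def planted_binary_def)
  hence "finite (nodes G')" by (rule rooted_treeD(1))
  hence "finite (losses G G')" "finite (dups G' \<rho>)"
    unfolding losses_def leaves_def dups_def by auto
  moreover have "ran \<delta> \<subseteq> losses G G'" "dom \<delta> \<subseteq> dups G' \<rho>" "inj_on \<delta> (dom \<delta>)"
    using rec by (simp_all add: reconciliation_def)
  ultimately have "card (losses G G' - ran \<delta>) + card (dups G' \<rho> - dom \<delta>) + card (dom \<delta>)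
      + card (dom \<delta>) = card (losses G G') + card (dups G' \<rho>)"
    by (rule card_partial_injection)
  thus ?thesis unfolding rcost_def by simp
qed

definition locally_similar :: "'v rtree \<Rightarrow> 'v rtree \<Rightarrow> ('v \<Rightarrow> 's) \<Rightarrow> bool" where
  "locally_similar T2 T \<rho> \<longleftrightarrow> nodes T2 \<subseteq> nodes T \<and> root T2 = root T \<and>
     (\<forall>y \<in> nodes T2. card (children T2 y) = card (children T y) \<and>
        \<rho> ` children T2 y = \<rho> ` children T y \<and> (children T2 y = {} \<longleftrightarrow> children T y = {}))"

lemma locally_similar_cond_D:
  assumes "locally_similar T2 T \<rho>" "y \<in> nodes T2"
  shows "cond_D T2 \<rho> y = cond_D T \<rho> y"
proof -
  have "cond_D T2 \<rho> y \<longleftrightarrow> \<rho> ` children T2 y \<subseteq> {\<rho> y}" unfolding cond_D_def by auto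
  also have "\<dots> \<longleftrightarrow> \<rho> ` children T y \<subseteq> {\<rho> y}" using assms unfolding locally_similar_def by simp
  also have "\<dots> \<longleftrightarrow> cond_D T \<rho> y" unfolding cond_D_def by auto
  finally show ?thesis .
qed

lemma locally_similar_consistent:
  assumes sim: "locally_similar T2 T \<rho>" and c: "consistent T S \<rho>"
  shows "consistent T2 S \<rho>"
proof -
  have "cond_D T2 \<rho> y \<or> cond_S T2 S \<rho> y" if "y \<in> nodes T2" "card (children T2 y) = 2" for y
  proof -
    have "y \<in> nodes T" "card (children T y) = 2"
      using sim that unfolding locally_similar_def by auto
    hence "cond_D T \<rho> y \<or> cond_S T S \<rho> y" using c unfolding consistent_def by blast
    moreover have "cond_S T2 S \<rho> y = cond_S T S \<rho> y"
      using sim that(1) unfolding locally_similar_def cond_S_def by simp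
    ultimately show ?thesis using locally_similar_cond_D[OF sim that(1)] by simp
  qed
  moreover have "\<rho> ` nodes T2 \<subseteq> nodes S" "\<rho> (root T2) = root S"
    using sim c unfolding locally_similar_def consistent_def by auto
  ultimately show ?thesis unfolding consistent_def by blast
qed

lemma locally_similar_dups:
  assumes "locally_similar T2 T \<rho>"
  shows "dups T2 \<rho> = dups T \<rho> \<inter> nodes T2"
  using assms locally_similar_cond_D[OF assms] unfolding dups_def locally_similar_def by auto

lemma locally_similar_leaves:
  assumes "locally_similar T2 T \<rho>"
  shows "leaves T2 = leaves T \<inter> nodes T2"
  using assms unfolding leaves_def locally_similar_def by auto

lemma locally_similar_planted_binary:
  assumes sim: "locally_similar T2 T \<rho>" and pb: "planted_binary T" and rt: "is_rooted_tree T2"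
  shows "planted_binary T2"
proof -
  have "root T2 \<in> nodes T2" using rooted_treeD(2)[OF rt] .
  hence "card (children T2 (root T2)) = 1" using sim pb unfolding locally_similar_def planted_binary_def by metis
  moreover have "children T2 y = {} \<or> card (children T2 y) = 2"
    if "y \<in> nodes T2" "y \<noteq> root T2" for y
  proof -
    have "children T y = {} \<or> card (children T y) = 2"
      using pb sim that unfolding planted_binary_def locally_similar_def by auto
    thus ?thesis using sim that(1) unfolding locally_similar_def by simp
  qed
  ultimately show ?thesis using rt unfolding planted_binary_def by blast
qed

section \<open>Pruned reconciliations\<close>

locale pruned_reconciliation =
  fixes G G' :: "'v rtree" and S :: "'s rtree" and \<phi> \<rho> :: "'v \<Rightarrow> 's"
    and \<delta> :: "'v \<Rightarrow> 'v option" and R :: "'v set"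
  assumes rec: "reconciliation G G' S \<phi> \<rho> \<delta>"
    and root_kept: "root G' \<in> R" and kept_nodes: "R \<subseteq> nodes G'"
    and kept_parent: "\<And>x y. (x, y) \<in> edges G' \<Longrightarrow> y \<in> R \<Longrightarrow> x \<in> R"
    and nodes_G: "nodes G = {x \<in> R. x = root G' \<or> card (children G' x \<inter> R) \<noteq> 1}"
    and root_G: "root G = root G'"
    and edges_G: "edges G = {(x, y). x \<in> nodes G \<and> y \<in> nodes G \<and> x \<noteq> y \<and> (x, y) \<in> (edges G')\<^sup>* \<and>
                      (\<forall>z \<in> nodes G. (x, z) \<in> (edges G')\<^sup>* \<and> (z, y) \<in> (edges G')\<^sup>* \<longrightarrow>
                                      z = x \<or> z = y)}"

lemma reconciliation_pruned:
  assumes "reconciliation G G' S \<phi> \<rho> \<delta>"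
  obtains R where "pruned_reconciliation G G' S \<phi> \<rho> \<delta> R"
proof -
  have "extension G' G" using assms by (simp add: reconciliation_def)
  then show ?thesis
    unfolding extension_def
    by (elim conjE exE) (intro that pruned_reconciliation.intro assms; (assumption | blast))
qed

context pruned_reconciliation
begin

lemma planted_G': "planted_binary G'" using rec unfolding reconciliation_def extension_def by blast
lemma planted_G: "planted_binary G" using rec unfolding reconciliation_def by blast
lemma rooted_G': "is_rooted_tree G'" using planted_G' unfolding planted_binary_def by blast
lemma consistent_G': "consistent G' S \<rho>" using rec unfolding reconciliation_def by blast

lemmas tree_G' = rooted_treeD[OF rooted_G']

lemma edge_nodes: "(u, v) \<in> edges G' \<Longrightarrow> u \<in> nodes G' \<and> v \<in> nodes G'"
  using tree_G'(3) by blast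

lemma parent_unique: "(w1, y) \<in> edges G' \<Longrightarrow> (w2, y) \<in> edges G' \<Longrightarrow> w1 = w2"
  using rooted_tree_parent_unique[OF rooted_G'] by blast

lemma acyclic_G': "(y, y) \<notin> (edges G')\<^sup>+"
  using rooted_tree_acyclic[OF rooted_G'] .

lemma finite_children: "finite (children G' y)"
  using tree_G'(1) edge_nodes unfolding children_def
  by (metis (no_types, lifting) finite_subset mem_Collect_eq subsetI)

lemma card_children_root: "card (children G' (root G')) = 1"
  using planted_G' unfolding planted_binary_def by blast

lemma dom_\<delta>: "dom \<delta> \<subseteq> dups G' \<rho>" using rec unfolding reconciliation_def by blast
lemma ran_\<delta>: "ran \<delta> \<subseteq> losses G G'" using rec unfolding reconciliation_def by blast
lemma inj_\<delta>: "inj_on \<delta> (dom \<delta>)" using rec unfolding reconciliation_def by blast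
lemma \<rho>_\<delta>: "x \<in> dom \<delta> \<Longrightarrow> \<rho> x = \<rho> (the (\<delta> x))" using rec unfolding reconciliation_def by blast

lemma reconciliationI:
  fixes G2 :: "'v rtree" and \<delta>2 :: "'v \<Rightarrow> 'v option"
  assumes "extension G2 G" "consistent G2 S \<rho>" "dom \<delta>2 \<subseteq> dups G2 \<rho>" "ran \<delta>2 \<subseteq> losses G G2"
    "inj_on \<delta>2 (dom \<delta>2)" "\<forall>x \<in> dom \<delta>2. \<rho> x = \<rho> (the (\<delta>2 x))"
  shows "reconciliation G G2 S \<phi> \<rho> \<delta>2"
  using assms rec unfolding reconciliation_def by blast

lemma dups_nodes: "dups G' \<rho> \<subseteq> nodes G'" unfolding dups_def by blast
lemma losses_nodes: "losses G G' \<subseteq> nodes G'" unfolding losses_def leaves_def by blast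
lemma finite_dups: "finite (dups G' \<rho>)" using dups_nodes tree_G'(1) finite_subset by blast
lemma finite_losses: "finite (losses G G')" using losses_nodes tree_G'(1) finite_subset by blast

lemma nodes_G_kept: "nodes G \<subseteq> R" using nodes_G by blast

lemma leaf_no_edge: "x \<in> leaves G' \<Longrightarrow> (x, y) \<notin> edges G'"
  unfolding leaves_def children_def by blast

lemma loss_pruned: "l \<in> losses G G' \<Longrightarrow> l \<notin> R"
proof
  assume l: "l \<in> losses G G'" and lR: "l \<in> R"
  have lf: "l \<in> leaves G'" "l \<notin> leaves G" using l unfolding losses_def by auto
  have "children G' l = {}" using lf(1) unfolding leaves_def by blast
  hence "l \<in> nodes G" using nodes_G lR by simp
  moreover have "children G l = {}"
  proof -
    have "(l, y) \<in> (edges G')\<^sup>* \<Longrightarrow> y = l" for y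
      using leaf_no_edge[OF lf(1)] by (metis converse_rtranclE)
    thus ?thesis unfolding children_def using edges_G by auto
  qed
  ultimately show False using lf(2) unfolding leaves_def by blast
qed

lemma leaf_not_root: "x \<in> leaves G' \<Longrightarrow> x \<noteq> root G'"
  using card_children_root unfolding leaves_def by auto

lemma dup_card_children: "x \<in> dups G' \<rho> \<Longrightarrow> card (children G' x) = 2"
  unfolding dups_def by blast

lemma dup_not_root: "x \<in> dups G' \<rho> \<Longrightarrow> x \<noteq> root G'"
  using dup_card_children card_children_root by fastforce

lemma dup_outside_children:
  assumes xD: "x \<in> dups G' \<rho>" and xG: "x \<notin> nodes G"
  obtains c d where "children G' x = {c, d}" "c \<noteq> d" "c \<notin> R" "x \<in> R \<longleftrightarrow> d \<in> R"
proof -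
  obtain c0 d0 where ch0: "children G' x = {c0, d0}" "c0 \<noteq> d0"
    using dup_card_children[OF xD] card_2_iff by metis
  show ?thesis
  proof (cases "x \<in> R")
    case True
    hence one: "card ({c0, d0} \<inter> R) = 1" using nodes_G xG dup_not_root[OF xD] ch0 by auto
    show ?thesis
    proof (cases "c0 \<in> R")
      case True2: True
      hence "d0 \<notin> R" using one ch0(2) by auto
      thus ?thesis using that[of d0 c0] ch0 True True2 by auto
    next
      case False
      hence "d0 \<in> R" using one by (cases "d0 \<in> R") auto
      thus ?thesis using that[of c0 d0] ch0 True False by auto
    qed
  next
    case False
    have "(x, c0) \<in> edges G'" "(x, d0) \<in> edges G'" using ch0 unfolding children_def by auto
    hence "c0 \<notin> R" "d0 \<notin> R" using kept_parent False by blast+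
    thus ?thesis using that[of c0 d0] ch0 False by auto
  qed
qed

lemma card_kept_children_move:
  assumes "y \<in> R - {x}" and xp: "\<And>w. (w, x) \<in> edges G' \<Longrightarrow> w = p" and px: "(p, x) \<in> edges G'"
    and dR: "x \<in> R \<longleftrightarrow> d \<in> R" and dp: "(p, d) \<notin> edges G'"
    and eq: "children H y \<inter> (R - {x}) = (children G' y \<inter> R - {x}) \<union> (if y = p \<and> d \<in> R then {d} else {})"
  shows "card (children H y \<inter> (R - {x})) = card (children G' y \<inter> R)"
proof (cases "y = p")
  case False
  have "x \<notin> children G' y" using xp False unfolding children_def by blast
  then show ?thesis using eq False by (simp add: Int_Diff[symmetric])
next
  case True
  have fin: "finite (children G' y \<inter> R)" using finite_children by simp
  show ?thesis
  proof (cases "d \<in> R")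
    case True2: True
    have "x \<in> children G' y \<inter> R" using True px dR True2 unfolding children_def by blast
    moreover have "d \<notin> children G' y \<inter> R" using dp True unfolding children_def by blast
    ultimately show ?thesis using eq True True2 card_swap_element[OF fin] by simp
  next
    case False
    then show ?thesis using eq True dR by simp
  qed
qed

lemma extension_with_kept_nodes:
  assumes pb2: "planted_binary G2" and rt2: "root G2 = root G'" and R'N: "R' \<subseteq> nodes G2"
    and rR': "root G' \<in> R'"
    and cl: "\<And>u v. (u, v) \<in> edges G2 \<Longrightarrow> v \<in> R' \<Longrightarrow> u \<in> R'"
    and nG: "nodes G = {x \<in> R'. x = root G' \<or> card (children G2 x \<inter> R') \<noteq> 1}"
    and re: "\<And>a b. a \<in> nodes G \<Longrightarrow> b \<in> nodes G \<Longrightarrow> (a, b) \<in> (edges G2)\<^sup>* \<longleftrightarrow> (a, b) \<in> (edges G')\<^sup>*"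
  shows "extension G2 G"
proof -
  have "edges G = {(x, y). x \<in> nodes G \<and> y \<in> nodes G \<and> x \<noteq> y \<and> (x, y) \<in> (edges G2)\<^sup>* \<and>
                      (\<forall>z \<in> nodes G. (x, z) \<in> (edges G2)\<^sup>* \<and> (z, y) \<in> (edges G2)\<^sup>* \<longrightarrow>
                                      z = x \<or> z = y)}"
    unfolding edges_G using re by blast
  hence "\<exists>R. root G2 \<in> R \<and> R \<subseteq> nodes G2 \<and>
          (\<forall>x y. (x, y) \<in> edges G2 \<and> y \<in> R \<longrightarrow> x \<in> R) \<and>
          nodes G = {x \<in> R. x = root G2 \<or> card (children G2 x \<inter> R) \<noteq> 1} \<and>
          root G = root G2 \<and>
          edges G = {(x, y). x \<in> nodes G \<and> y \<in> nodes G \<and> x \<noteq> y \<and> (x, y) \<in> (edges G2)\<^sup>* \<and>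
                      (\<forall>z \<in> nodes G. (x, z) \<in> (edges G2)\<^sup>* \<and> (z, y) \<in> (edges G2)\<^sup>* \<longrightarrow>
                                      z = x \<or> z = y)}"
    using rt2 R'N rR' cl nG root_G by (intro exI[of _ R']) auto
  thus ?thesis unfolding extension_def using pb2 planted_G by blast
qed

end

section \<open>Dropping the pruned subtree below a duplication\<close>

locale dup_outside = pruned_reconciliation G G' S \<phi> \<rho> \<delta> R
  for G G' :: "'v rtree" and S :: "'s rtree" and \<phi> \<rho> :: "'v \<Rightarrow> 's"
    and \<delta> :: "'v \<Rightarrow> 'v option" and R :: "'v set" +
  fixes x c d p :: 'v
  assumes x_dup: "x \<in> dups G' \<rho>" and x_outside: "x \<notin> nodes G"
    and children_x: "children G' x = {c, d}" and c_ne_d: "c \<noteq> d"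
    and edge_p_x: "(p, x) \<in> edges G'" and c_pruned: "c \<notin> R" and x_kept_iff_d: "x \<in> R \<longleftrightarrow> d \<in> R"
begin

lemma x_not_root: "x \<noteq> root G'" using dup_not_root[OF x_dup] .
lemma edge_x_c: "(x, c) \<in> edges G'" using children_x unfolding children_def by blast
lemma edge_x_d: "(x, d) \<in> edges G'" using children_x unfolding children_def by blast
lemma edge_from_x: "(x, z) \<in> edges G' \<Longrightarrow> z = c \<or> z = d" using children_x unfolding children_def by blast
lemma parent_x: "(w, x) \<in> edges G' \<Longrightarrow> w = p" using parent_unique edge_p_x by blast
lemma parent_c: "(w, c) \<in> edges G' \<Longrightarrow> w = x" using parent_unique edge_x_c by blast
lemma parent_d: "(w, d) \<in> edges G' \<Longrightarrow> w = x" using parent_unique edge_x_d by blast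
lemma p_ne_x: "p \<noteq> x" using edge_p_x acyclic_G' by blast
lemma c_ne_x: "c \<noteq> x" using edge_x_c acyclic_G' by blast
lemma d_ne_x: "d \<noteq> x" using edge_x_d acyclic_G' by blast
lemma c_not_root: "c \<noteq> root G'" using edge_x_c tree_G'(4) by blast
lemma d_not_root: "d \<noteq> root G'" using edge_x_d tree_G'(4) by blast
lemma p_node: "p \<in> nodes G'" using edge_p_x edge_nodes by blast
lemma c_node: "c \<in> nodes G'" using edge_x_c edge_nodes by blast
lemma d_node: "d \<in> nodes G'" using edge_x_d edge_nodes by blast
lemma no_edge_p_d: "(p, d) \<notin> edges G'" using parent_d p_ne_x by blast
lemma \<rho>_c: "\<rho> c = \<rho> x" and \<rho>_d: "\<rho> d = \<rho> x"
  using x_dup children_x unfolding dups_def cond_D_def by auto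

lemma x_not_loss: "x \<notin> losses G G'"
  using children_x unfolding losses_def leaves_def by auto

lemma x_child_of_p: "x \<in> children G' p" using edge_p_x unfolding children_def by blast
lemma d_not_child_of_p: "d \<notin> children G' p" using no_edge_p_d unfolding children_def by blast
lemma x_not_child: "y \<noteq> p \<Longrightarrow> x \<notin> children G' y" using parent_x unfolding children_def by blast

lemma x_not_below_c: "(c, x) \<notin> (edges G')\<^sup>*"
proof
  assume "(c, x) \<in> (edges G')\<^sup>*"
  hence "(x, x) \<in> (edges G')\<^sup>+" using edge_x_c by (meson rtrancl_into_trancl2)
  thus False using acyclic_G' by blast
qed

lemma p_not_below_c: "(c, p) \<notin> (edges G')\<^sup>*"
  using x_not_below_c edge_p_x by (meson rtrancl.rtrancl_into_rtrancl)

lemma d_not_below_c: "(c, d) \<notin> (edges G')\<^sup>*"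
proof
  assume "(c, d) \<in> (edges G')\<^sup>*"
  then obtain w where "(c, w) \<in> (edges G')\<^sup>*" "(w, d) \<in> edges G'"
    using c_ne_d by (cases rule: rtranclE) auto
  thus False using parent_d x_not_below_c by blast
qed

lemma root_not_below_c: "(c, root G') \<notin> (edges G')\<^sup>*"
proof
  assume "(c, root G') \<in> (edges G')\<^sup>*"
  then obtain w where "(w, root G') \<in> edges G'"
    using c_not_root by (cases rule: rtranclE) auto
  thus False using tree_G'(4) by blast
qed

lemma below_c_step: "(c, u) \<in> (edges G')\<^sup>* \<Longrightarrow> (u, v) \<in> edges G' \<Longrightarrow> (c, v) \<in> (edges G')\<^sup>*"
  by (meson rtrancl.rtrancl_into_rtrancl)

lemma edge_into_below_c:
  assumes "(u, v) \<in> edges G'" "(c, v) \<in> (edges G')\<^sup>*"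
  shows "u = x \<or> (c, u) \<in> (edges G')\<^sup>*"
  using assms(2)
proof (cases rule: rtranclE)
  case base then show ?thesis using assms(1) parent_c by blast
next
  case (step w) then show ?thesis using assms(1) parent_unique by blast
qed

lemma below_c_pruned: "(c, y) \<in> (edges G')\<^sup>* \<Longrightarrow> y \<notin> R"
proof (induction rule: rtrancl_induct)
  case base then show ?case using c_pruned .
next
  case (step y z) then show ?case using kept_parent by blast
qed

definition dropped :: "'v set" where "dropped = {y. (c, y) \<in> (edges G')\<^sup>*} \<union> {x}"

definition G_drop :: "'v rtree" where
  "G_drop = \<lparr>nodes = nodes G' - dropped, root = root G',
     edges = {(u, v). (u, v) \<in> edges G' \<and> u \<notin> dropped \<and> v \<notin> dropped} \<union> {(p, d)}\<rparr>"

definition \<delta>_drop :: "'v \<Rightarrow> 'v option" where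
  "\<delta>_drop y = (if y \<in> dropped then None else (case \<delta> y of None \<Rightarrow> None
            | Some l \<Rightarrow> if l \<in> dropped then None else Some l))"

lemma G_drop_simps [simp]:
  "nodes G_drop = nodes G' - dropped" "root G_drop = root G'"
  "edges G_drop = {(u, v). (u, v) \<in> edges G' \<and> u \<notin> dropped \<and> v \<notin> dropped} \<union> {(p, d)}"
  unfolding G_drop_def by simp_all

lemma in_dropped: "y \<in> dropped \<longleftrightarrow> (c, y) \<in> (edges G')\<^sup>* \<or> y = x" unfolding dropped_def by blast

lemma p_notin_dropped: "p \<notin> dropped" using in_dropped p_not_below_c p_ne_x by blast
lemma d_notin_dropped: "d \<notin> dropped" using in_dropped d_not_below_c d_ne_x by blast
lemma root_notin_dropped: "root G' \<notin> dropped" using in_dropped root_not_below_c x_not_root by blast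
lemma x_in_dropped: "x \<in> dropped" unfolding in_dropped by simp
lemma kept_notin_dropped: "y \<in> R \<Longrightarrow> y \<noteq> x \<Longrightarrow> y \<notin> dropped"
  using below_c_pruned unfolding in_dropped by blast

lemma edge_into_dropped: "y \<notin> dropped \<Longrightarrow> (y, v) \<in> edges G' \<Longrightarrow> v \<in> dropped \<Longrightarrow> y = p \<and> v = x"
  using in_dropped edge_into_below_c parent_x by blast

lemma children_G_drop:
  assumes "y \<in> nodes G_drop"
  shows "children G_drop y = (if y = p then children G' y - {x} \<union> {d} else children G' y)"
proof -
  have y: "y \<notin> dropped" using assms by simp
  then show ?thesis
    unfolding children_def G_drop_simps using edge_into_dropped[OF y] d_notin_dropped x_not_below_c
    by (auto simp: in_dropped)
qed

lemma locally_similar_G_drop: "locally_similar G_drop G' \<rho>"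
  unfolding locally_similar_def
proof (intro conjI ballI)
  fix y assume y: "y \<in> nodes G_drop"
  show "card (children G_drop y) = card (children G' y)" "\<rho> ` children G_drop y = \<rho> ` children G' y"
    "children G_drop y = {} \<longleftrightarrow> children G' y = {}"
    using children_G_drop[OF y] card_swap_element[OF finite_children x_child_of_p d_not_child_of_p]
      image_swap_element[OF x_child_of_p, of \<rho> d] \<rho>_d x_child_of_p by auto
qed auto

lemma reach_G_drop:
  assumes "(a, y) \<in> (edges G')\<^sup>*" "a \<notin> dropped" "y \<notin> dropped"
  shows "(a, y) \<in> (edges G_drop)\<^sup>*"
  using assms(1)
proof (rule rtrancl_splice[where B="{y. (c, y) \<in> (edges G')\<^sup>*}" and x=x and p=p and d=d])
  show "y \<notin> {y. (c, y) \<in> (edges G')\<^sup>*}" "y \<noteq> x" "a \<notin> {y. (c, y) \<in> (edges G')\<^sup>*}" "a \<noteq> x"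
    using assms(2,3) unfolding in_dropped by auto
  show "p \<notin> {y. (c, y) \<in> (edges G')\<^sup>*}" using p_not_below_c by simp
  show "(p, d) \<in> edges G_drop" by simp
  fix u v
  show "(u, v) \<in> edges G' \<Longrightarrow> u \<in> {y. (c, y) \<in> (edges G')\<^sup>*} \<Longrightarrow> v \<in> {y. (c, y) \<in> (edges G')\<^sup>*}"
    using below_c_step by blast
  show "(u, v) \<in> edges G' \<Longrightarrow> u \<notin> {y. (c, y) \<in> (edges G')\<^sup>*} \<Longrightarrow>
      v \<notin> {y. (c, y) \<in> (edges G')\<^sup>*} \<Longrightarrow> u \<noteq> x \<Longrightarrow> v \<noteq> x \<Longrightarrow> (u, v) \<in> edges G_drop"
    by (simp add: in_dropped)
qed (use parent_x p_ne_x edge_from_x in blast)+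

lemma reach_G_drop_rev:
  assumes "(a, y) \<in> (edges G_drop)\<^sup>*" shows "(a, y) \<in> (edges G')\<^sup>*"
proof (rule rtrancl_simulated[OF assms, of "{}"])
  fix u v assume "(u, v) \<in> edges G_drop"
  moreover have "(p, d) \<in> (edges G')\<^sup>*" using edge_p_x edge_x_d by auto
  ultimately show "(u, v) \<in> (edges G')\<^sup>* \<and> u \<notin> {}" by auto
qed simp

lemma parent_in_G_drop:
  assumes y: "y \<in> nodes G_drop" "y \<noteq> root G'"
  shows "\<exists>!w. (w, y) \<in> edges G_drop"
proof -
  have yN: "y \<in> nodes G'" "y \<notin> dropped" using y by auto
  obtain w where w: "(w, y) \<in> edges G'" using tree_G'(5)[OF yN(1) y(2)] by blast
  have "\<exists>w. (w, y) \<in> edges G_drop"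
  proof (cases "w = x")
    case True
    have "y \<noteq> c" using yN(2) unfolding in_dropped by auto
    then have "y = d" using edge_from_x w True by blast
    then show ?thesis by auto
  next
    case False
    have "(c, w) \<notin> (edges G')\<^sup>*" using yN(2) below_c_step[OF _ w] unfolding in_dropped by blast
    then have "w \<notin> dropped" using False unfolding in_dropped by simp
    then show ?thesis using w yN(2) by auto
  qed
  moreover have "w1 = w2" if "(w1, y) \<in> edges G_drop" "(w2, y) \<in> edges G_drop" for w1 w2
    using that parent_unique parent_d x_in_dropped by auto
  ultimately show ?thesis by blast
qed

lemma rooted_tree_G_drop: "is_rooted_tree G_drop"
  unfolding is_rooted_tree_def
proof (intro conjI ballI allI impI)
  show "finite (nodes G_drop)" using tree_G'(1) by simp
  show "root G_drop \<in> nodes G_drop" using tree_G'(2) root_notin_dropped by simp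
  show "edges G_drop \<subseteq> nodes G_drop \<times> nodes G_drop"
    using edge_nodes p_node p_notin_dropped d_node d_notin_dropped by auto
  show "(w, root G_drop) \<notin> edges G_drop" for w using tree_G'(4) d_not_root by auto
  show "\<exists>!w. (w, y) \<in> edges G_drop" if "y \<in> nodes G_drop" "y \<noteq> root G_drop" for y
    using parent_in_G_drop that by simp
  show "(root G_drop, y) \<in> (edges G_drop)\<^sup>*" if "y \<in> nodes G_drop" for y
    using reach_G_drop tree_G'(6) root_notin_dropped that by simp
qed

lemma extension_G_drop: "extension G_drop G"
proof (rule extension_with_kept_nodes[of G_drop "R - {x}"])
  show "planted_binary G_drop"
    using locally_similar_planted_binary[OF locally_similar_G_drop planted_G' rooted_tree_G_drop] .
  show "R - {x} \<subseteq> nodes G_drop" using kept_nodes kept_notin_dropped by auto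
  show "root G' \<in> R - {x}" using root_kept x_not_root by blast
  show "u \<in> R - {x}" if "(u, v) \<in> edges G_drop" "v \<in> R - {x}" for u v
  proof -
    have "((u, v) \<in> edges G' \<and> u \<notin> dropped \<and> v \<notin> dropped) \<or> (u = p \<and> v = d)" using that(1) by auto
    then show ?thesis
    proof
      assume "(u, v) \<in> edges G' \<and> u \<notin> dropped \<and> v \<notin> dropped"
      then show ?thesis using kept_parent that(2) x_in_dropped by blast
    next
      assume "u = p \<and> v = d"
      then show ?thesis using that(2) x_kept_iff_d kept_parent edge_p_x p_ne_x by blast
    qed
  qed
  have "card (children G_drop y \<inter> (R - {x})) = card (children G' y \<inter> R)" if "y \<in> R - {x}" for y
  proof (rule card_kept_children_move[OF that parent_x edge_p_x x_kept_iff_d no_edge_p_d])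
    have "y \<in> nodes G_drop" using that kept_nodes kept_notin_dropped by auto
    then show "children G_drop y \<inter> (R - {x}) =
        children G' y \<inter> R - {x} \<union> (if y = p \<and> d \<in> R then {d} else {})"
      using children_G_drop d_ne_x by auto
  qed
  moreover have "nodes G = {y \<in> R - {x}. y = root G' \<or> card (children G' y \<inter> R) \<noteq> 1}"
    using nodes_G x_outside by auto
  ultimately show "nodes G = {y \<in> R - {x}. y = root G' \<or> card (children G_drop y \<inter> (R - {x})) \<noteq> 1}"
    by auto
  show "(a, b) \<in> (edges G_drop)\<^sup>* \<longleftrightarrow> (a, b) \<in> (edges G')\<^sup>*" if "a \<in> nodes G" "b \<in> nodes G" for a b
    using that nodes_G_kept x_outside kept_notin_dropped reach_G_drop reach_G_drop_rev by blast
qed simp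

lemma \<delta>_drop_SomeD: "\<delta>_drop y = Some l \<Longrightarrow> \<delta> y = Some l \<and> y \<notin> dropped \<and> l \<notin> dropped"
  unfolding \<delta>_drop_def by (auto split: if_splits option.splits)

lemma dom_\<delta>_drop: "dom \<delta>_drop = {y \<in> dom \<delta>. y \<notin> dropped \<and> the (\<delta> y) \<notin> dropped}"
  unfolding \<delta>_drop_def dom_def by (auto split: if_splits option.splits)

lemma losses_G_drop: "losses G G_drop = losses G G' - dropped"
  using locally_similar_leaves[OF locally_similar_G_drop] losses_nodes unfolding losses_def by auto

lemma dups_G_drop: "dups G_drop \<rho> = dups G' \<rho> - dropped"
  using locally_similar_dups[OF locally_similar_G_drop] dups_nodes by auto

lemma reconciliation_G_drop: "reconciliation G G_drop S \<phi> \<rho> \<delta>_drop"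
proof (rule reconciliationI)
  show "extension G_drop G" by (rule extension_G_drop)
  show "consistent G_drop S \<rho>"
    using locally_similar_consistent[OF locally_similar_G_drop consistent_G'] .
  show "dom \<delta>_drop \<subseteq> dups G_drop \<rho>" using dom_\<delta> unfolding dom_\<delta>_drop dups_G_drop by blast
  show "ran \<delta>_drop \<subseteq> losses G G_drop"
    using ran_\<delta> \<delta>_drop_SomeD unfolding losses_G_drop ran_def by blast
  show "inj_on \<delta>_drop (dom \<delta>_drop)"
  proof (rule inj_onI)
    fix y1 y2 assume "y1 \<in> dom \<delta>_drop" "y2 \<in> dom \<delta>_drop" "\<delta>_drop y1 = \<delta>_drop y2"
    then obtain l where "\<delta>_drop y1 = Some l" "\<delta>_drop y2 = Some l" by auto
    hence "\<delta> y1 = Some l" "\<delta> y2 = Some l" using \<delta>_drop_SomeD by auto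
    thus "y1 = y2" using inj_\<delta> unfolding inj_on_def by (simp add: domI)
  qed
  show "\<forall>y \<in> dom \<delta>_drop. \<rho> y = \<rho> (the (\<delta>_drop y))"
  proof
    fix y assume "y \<in> dom \<delta>_drop"
    then obtain l where l: "\<delta>_drop y = Some l" by auto
    hence "\<delta> y = Some l" using \<delta>_drop_SomeD by blast
    thus "\<rho> y = \<rho> (the (\<delta>_drop y))" using \<rho>_\<delta>[of y] l by (simp add: domI)
  qed
qed

lemma card_lost_pairs:
  assumes "\<delta> x = None \<or> the (\<delta> x) \<in> dropped"
  shows "card (dom \<delta> - dom \<delta>_drop) < card (dups G' \<rho> \<inter> dropped) + card (losses G G' \<inter> dropped)"
proof -
  define A where "A = dom \<delta> \<inter> dropped"
  define B where "B = {y \<in> dom \<delta>. the (\<delta> y) \<in> dropped}"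
  have lost: "dom \<delta> - dom \<delta>_drop = A \<union> B" unfolding A_def B_def dom_\<delta>_drop by blast
  have fin: "finite (dom \<delta>)" using dom_\<delta> finite_dups finite_subset by blast
  have "card B \<le> card (losses G G' \<inter> dropped)"
  proof (rule card_inj_on_le)
    show "inj_on (\<lambda>y. the (\<delta> y)) B" using inj_\<delta> unfolding inj_on_def B_def dom_def
      by (metis (mono_tags, lifting) mem_Collect_eq option.collapse)
    show "(\<lambda>y. the (\<delta> y)) ` B \<subseteq> losses G G' \<inter> dropped"
      using ran_\<delta> unfolding B_def ran_def by force
  qed (simp add: finite_losses)
  moreover have A_sub: "A \<subseteq> dups G' \<rho> \<inter> dropped" unfolding A_def using dom_\<delta> by blast
  moreover have "card (A \<union> B) < card (dups G' \<rho> \<inter> dropped) + card B"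
  proof (cases "\<delta> x = None")
    case True
    hence "A \<subset> dups G' \<rho> \<inter> dropped" using A_sub x_dup x_in_dropped unfolding A_def by auto
    hence "card A < card (dups G' \<rho> \<inter> dropped)" by (simp add: finite_dups psubset_card_mono)
    thus ?thesis using card_Un_le[of A B] by linarith
  next
    case False
    hence "x \<in> A \<inter> B" using assms x_in_dropped unfolding A_def B_def by auto
    moreover have "finite A" "finite B" using fin unfolding A_def B_def by auto
    ultimately have "card (A \<union> B) < card A + card B"
      using card_Un_Int[of A B] by (metis card_gt_0_iff empty_iff finite_Int less_add_same_cancel1)
    moreover have "card A \<le> card (dups G' \<rho> \<inter> dropped)"
      using A_sub by (simp add: card_mono finite_dups)
    ultimately show ?thesis by linarith
  qed
  ultimately show ?thesis unfolding lost by linarith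
qed

lemma rcost_G_drop_less:
  assumes "\<delta> x = None \<or> the (\<delta> x) \<in> dropped"
  shows "rcost G G_drop \<rho> \<delta>_drop < rcost G G' \<rho> \<delta>"
proof -
  have "card (losses G G') = card (losses G G_drop) + card (losses G G' \<inter> dropped)"
    unfolding losses_G_drop using card_Int_Diff[OF finite_losses, of dropped] by linarith
  moreover have "card (dups G' \<rho>) = card (dups G_drop \<rho>) + card (dups G' \<rho> \<inter> dropped)"
    unfolding dups_G_drop using card_Int_Diff[OF finite_dups, of dropped] by linarith
  moreover have "card (dom \<delta>) = card (dom \<delta>_drop) + card (dom \<delta> - dom \<delta>_drop)"
    using card_Int_Diff[of "dom \<delta>" "dom \<delta>_drop"] dom_\<delta> finite_dups finite_subset
    unfolding dom_\<delta>_drop by (metis (no_types, lifting) Int_absorb1 mem_Collect_eq subsetI)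
  ultimately show ?thesis
    using rcost_reconciliation[OF rec] rcost_reconciliation[OF reconciliation_G_drop]
      card_lost_pairs[OF assms] by linarith
qed

end
section \<open>Exchanging a duplication and its paired loss\<close>

locale dup_paired_outside = dup_outside G G' S \<phi> \<rho> \<delta> R x c d p
  for G G' :: "'v rtree" and S :: "'s rtree" and \<phi> \<rho> :: "'v \<Rightarrow> 's"
    and \<delta> :: "'v \<Rightarrow> 'v option" and R :: "'v set" and x c d p :: 'v +
  fixes l q :: 'v
  assumes \<delta>_x: "\<delta> x = Some l" and l_not_below_c: "(c, l) \<notin> (edges G')\<^sup>*" and l_ne_d: "l \<noteq> d"
    and edge_q_l: "(q, l) \<in> edges G'"
begin

lemma l_loss: "l \<in> losses G G'" using \<delta>_x ran_\<delta> unfolding ran_def by blast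
lemma l_leaf: "l \<in> leaves G'" using l_loss unfolding losses_def by blast
lemma no_edge_from_l: "(l, v) \<notin> edges G'" using leaf_no_edge[OF l_leaf] .
lemma l_pruned: "l \<notin> R" using loss_pruned[OF l_loss] .
lemma l_ne_x: "l \<noteq> x" using l_loss x_not_loss by blast
lemma l_ne_c: "l \<noteq> c" using l_not_below_c by blast
lemma l_not_root: "l \<noteq> root G'" using leaf_not_root[OF l_leaf] .
lemma l_not_dup: "l \<notin> dups G' \<rho>" using l_leaf unfolding leaves_def dups_def by auto
lemma q_ne_x: "q \<noteq> x" using edge_q_l edge_from_x l_ne_d l_ne_c by blast
lemma q_ne_l: "q \<noteq> l" using edge_q_l no_edge_from_l by blast
lemma p_ne_l: "p \<noteq> l" using edge_p_x no_edge_from_l by blast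
lemma q_not_below_c: "(c, q) \<notin> (edges G')\<^sup>*" using l_not_below_c edge_q_l below_c_step by blast
lemma q_node: "q \<in> nodes G'" using edge_q_l edge_nodes by blast
lemma parent_l: "(w, l) \<in> edges G' \<Longrightarrow> w = q" using parent_unique edge_q_l by blast
lemma \<rho>_l: "\<rho> l = \<rho> x" using \<rho>_\<delta>[of x] \<delta>_x by (simp add: domIff)
lemma l_child_of_q: "l \<in> children G' q" using edge_q_l unfolding children_def by blast
lemma c_not_child_of_q: "c \<notin> children G' q" using parent_c q_ne_x unfolding children_def by blast

definition G_swap :: "'v rtree" where
  "G_swap = \<lparr>nodes = nodes G' - {x, l}, root = root G',
     edges = {(u, v). (u, v) \<in> edges G' \<and> u \<noteq> x \<and> v \<noteq> x \<and> v \<noteq> l} \<union> {(p, d), (q, c)}\<rparr>"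

definition \<delta>_swap :: "'v \<Rightarrow> 'v option" where "\<delta>_swap = \<delta>(x := None)"

lemma G_swap_simps [simp]:
  "nodes G_swap = nodes G' - {x, l}" "root G_swap = root G'"
  "edges G_swap = {(u, v). (u, v) \<in> edges G' \<and> u \<noteq> x \<and> v \<noteq> x \<and> v \<noteq> l} \<union> {(p, d), (q, c)}"
  unfolding G_swap_def by simp_all

lemma edge_G_swap_cases:
  "(u, v) \<in> edges G_swap \<Longrightarrow> ((u, v) \<in> edges G' \<and> u \<noteq> x \<and> v \<noteq> x \<and> v \<noteq> l) \<or>
    (u = p \<and> v = d) \<or> (u = q \<and> v = c)"
  by auto

lemma children_G_swap:
  "y \<in> nodes G_swap \<Longrightarrow> children G_swap y = (children G' y - {x, l}) \<union> (if y = p then {d} else {})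
     \<union> (if y = q then {c} else {})"
  unfolding children_def by auto

lemma locally_similar_G_swap: "locally_similar G_swap G' \<rho>"
  unfolding locally_similar_def
proof (intro conjI ballI)
  fix y assume y: "y \<in> nodes G_swap"
  have swap_p: "card (children G' p - {x} \<union> {d}) = card (children G' p) \<and>
             \<rho> ` (children G' p - {x} \<union> {d}) = \<rho> ` children G' p"
    using card_swap_element[OF finite_children x_child_of_p d_not_child_of_p]
      image_swap_element[OF x_child_of_p, of \<rho> d] \<rho>_d by simp
  have swap_q: "card (children G' q - {l} \<union> {c}) = card (children G' q) \<and>
             \<rho> ` (children G' q - {l} \<union> {c}) = \<rho> ` children G' q"
    using card_swap_element[OF finite_children l_child_of_q c_not_child_of_q]
      image_swap_element[OF l_child_of_q, of \<rho> c] \<rho>_c \<rho>_l by simp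
  have "card (children G_swap y) = card (children G' y) \<and>
      \<rho> ` children G_swap y = \<rho> ` children G' y \<and> (children G_swap y = {} \<longleftrightarrow> children G' y = {})"
  proof (cases "y = p"; cases "y = q")
    assume yp: "y = p" and yq: "y = q"
    define A where "A = children G' p - {x} \<union> {d}"
    have A: "finite A" "l \<in> A" "c \<notin> A"
      unfolding A_def using finite_children l_child_of_q c_not_child_of_q yp yq l_ne_x c_ne_d by auto
    have "children G_swap y = A - {l} \<union> {c}"
      unfolding A_def using children_G_swap[OF y] yp yq l_ne_d l_ne_c by auto
    then show ?thesis using card_swap_element[OF A] image_swap_element[OF A(2), of \<rho> c]
        \<rho>_c \<rho>_l swap_p x_child_of_p yp unfolding A_def by auto
  next
    assume yp: "y = p" and yq: "y \<noteq> q"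
    have "l \<notin> children G' p" using parent_l yp yq unfolding children_def by blast
    hence "children G_swap y = children G' p - {x} \<union> {d}" using children_G_swap[OF y] yp yq by auto
    then show ?thesis using swap_p yp x_child_of_p by auto
  next
    assume yp: "y \<noteq> p" and yq: "y = q"
    have "x \<notin> children G' q" using x_not_child yp yq by blast
    hence "children G_swap y = children G' q - {l} \<union> {c}" using children_G_swap[OF y] yp yq by auto
    then show ?thesis using swap_q yq l_child_of_q by auto
  next
    assume yp: "y \<noteq> p" and yq: "y \<noteq> q"
    have "children G' y \<inter> {x, l} = {}" using parent_x parent_l yp yq unfolding children_def by blast
    then show ?thesis using children_G_swap[OF y] yp yq by auto
  qed
  then show "card (children G_swap y) = card (children G' y)" "\<rho> ` children G_swap y = \<rho> ` children G' y"
    "children G_swap y = {} \<longleftrightarrow> children G' y = {}" by simp_all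
qed auto

lemma reach_G_swap:
  assumes "(a, y) \<in> (edges G')\<^sup>*" "(c, a) \<notin> (edges G')\<^sup>*" "a \<noteq> l" "a \<noteq> x"
    "(c, y) \<notin> (edges G')\<^sup>*" "y \<noteq> l" "y \<noteq> x"
  shows "(a, y) \<in> (edges G_swap)\<^sup>*"
  using assms(1)
proof (rule rtrancl_splice[where B="{y. (c, y) \<in> (edges G')\<^sup>* \<or> y = l}" and x=x and p=p and d=d])
  show "y \<notin> {y. (c, y) \<in> (edges G')\<^sup>* \<or> y = l}" "a \<notin> {y. (c, y) \<in> (edges G')\<^sup>* \<or> y = l}"
    "p \<notin> {y. (c, y) \<in> (edges G')\<^sup>* \<or> y = l}"
    using assms p_not_below_c p_ne_l by simp_all
  show "(p, d) \<in> edges G_swap" by simp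
  fix u v
  show "(u, v) \<in> edges G' \<Longrightarrow> u \<in> {y. (c, y) \<in> (edges G')\<^sup>* \<or> y = l} \<Longrightarrow>
      v \<in> {y. (c, y) \<in> (edges G')\<^sup>* \<or> y = l}"
    using below_c_step no_edge_from_l by blast
  show "(u, v) \<in> edges G' \<Longrightarrow> u \<notin> {y. (c, y) \<in> (edges G')\<^sup>* \<or> y = l} \<Longrightarrow>
      v \<notin> {y. (c, y) \<in> (edges G')\<^sup>* \<or> y = l} \<Longrightarrow> u \<noteq> x \<Longrightarrow> v \<noteq> x \<Longrightarrow> (u, v) \<in> edges G_swap"
    by simp
qed (use assms(4,7) parent_x p_ne_x edge_from_x in blast)+

lemma reach_G_swap_rev:
  assumes "(a, y) \<in> (edges G_swap)\<^sup>*" "(c, y) \<notin> (edges G')\<^sup>*"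
  shows "(a, y) \<in> (edges G')\<^sup>*"
proof (rule rtrancl_simulated[OF assms(1), where B="{y. (c, y) \<in> (edges G')\<^sup>*}"])
  show "y \<notin> {y. (c, y) \<in> (edges G')\<^sup>*}" using assms(2) by simp
  fix u v assume e: "(u, v) \<in> edges G_swap" and v: "v \<notin> {y. (c, y) \<in> (edges G')\<^sup>*}"
  show "(u, v) \<in> (edges G')\<^sup>* \<and> u \<notin> {y. (c, y) \<in> (edges G')\<^sup>*}"
    using edge_G_swap_cases[OF e]
  proof (elim disjE)
    assume h: "(u, v) \<in> edges G' \<and> u \<noteq> x \<and> v \<noteq> x \<and> v \<noteq> l"
    have "(c, u) \<notin> (edges G')\<^sup>*" using v h below_c_step by blast
    thus ?thesis using h by auto
  next
    assume "u = p \<and> v = d"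
    moreover have "(p, d) \<in> (edges G')\<^sup>*" using edge_p_x edge_x_d by auto
    ultimately show ?thesis using p_not_below_c by simp
  qed (use v in simp)
qed

lemma root_reaches_G_swap:
  assumes "y \<in> nodes G_swap"
  shows "(root G', y) \<in> (edges G_swap)\<^sup>*"
proof -
  have yN: "y \<in> nodes G'" "y \<noteq> x" "y \<noteq> l" using assms by auto
  have r: "(c, root G') \<notin> (edges G')\<^sup>*" "root G' \<noteq> l" "root G' \<noteq> x"
    using root_not_below_c l_not_root x_not_root by auto
  show ?thesis
  proof (cases "(c, y) \<in> (edges G')\<^sup>*")
    case False
    then show ?thesis using reach_G_swap[OF tree_G'(6)[OF yN(1)] r] yN by blast
  next
    case True
    have "(root G', q) \<in> (edges G_swap)\<^sup>*"
      using reach_G_swap[OF tree_G'(6)[OF q_node] r q_not_below_c q_ne_l q_ne_x] .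
    moreover have "(q, c) \<in> edges G_swap" by simp
    moreover have "(c, y) \<in> (edges G_swap)\<^sup>*"
    proof (rule rtrancl_mono_from[OF True])
      fix u v assume h: "(c, u) \<in> (edges G')\<^sup>*" "(u, v) \<in> edges G'"
      have "(c, v) \<in> (edges G')\<^sup>*" using below_c_step h by blast
      hence "v \<noteq> x" "v \<noteq> l" using x_not_below_c l_not_below_c by auto
      moreover have "u \<noteq> x" using h(1) x_not_below_c by auto
      ultimately show "(u, v) \<in> edges G_swap" using h(2) by simp
    qed
    ultimately show ?thesis by (meson converse_rtrancl_into_rtrancl rtrancl_trans)
  qed
qed

lemma rooted_tree_G_swap: "is_rooted_tree G_swap"
  unfolding is_rooted_tree_def
proof (intro conjI ballI allI impI)
  show "finite (nodes G_swap)" using tree_G'(1) by simp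
  show "root G_swap \<in> nodes G_swap" using tree_G'(2) x_not_root l_not_root by simp
  show "edges G_swap \<subseteq> nodes G_swap \<times> nodes G_swap"
    using edge_nodes no_edge_from_l p_node d_node q_node c_node p_ne_x p_ne_l d_ne_x l_ne_d
      q_ne_x q_ne_l c_ne_x l_ne_c by auto
  show "(w, root G_swap) \<notin> edges G_swap" for w using tree_G'(4) d_not_root c_not_root by auto
  show "\<exists>!w. (w, y) \<in> edges G_swap" if y: "y \<in> nodes G_swap" "y \<noteq> root G_swap" for y
  proof -
    have yN: "y \<in> nodes G'" "y \<noteq> x" "y \<noteq> l" using y by auto
    obtain w where w: "(w, y) \<in> edges G'" using tree_G'(5)[OF yN(1)] y(2) by auto
    have "\<exists>w. (w, y) \<in> edges G_swap"
    proof (cases "w = x")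
      case True
      then show ?thesis using edge_from_x w by auto
    next
      case False
      then show ?thesis using w yN by auto
    qed
    moreover have "w1 = w2" if "(w1, y) \<in> edges G_swap" "(w2, y) \<in> edges G_swap" for w1 w2
      using edge_G_swap_cases[OF that(1)] edge_G_swap_cases[OF that(2)]
        parent_unique parent_d parent_c c_ne_d by metis
    ultimately show ?thesis by blast
  qed
  show "(root G_swap, y) \<in> (edges G_swap)\<^sup>*" if "y \<in> nodes G_swap" for y
    using root_reaches_G_swap[OF that] by simp
qed

lemma extension_G_swap: "extension G_swap G"
proof (rule extension_with_kept_nodes[of G_swap "R - {x}"])
  show "planted_binary G_swap"
    using locally_similar_planted_binary[OF locally_similar_G_swap planted_G' rooted_tree_G_swap] .
  show "R - {x} \<subseteq> nodes G_swap" using kept_nodes l_pruned by auto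
  show "root G' \<in> R - {x}" using root_kept x_not_root by blast
  show "u \<in> R - {x}" if "(u, v) \<in> edges G_swap" "v \<in> R - {x}" for u v
    using edge_G_swap_cases[OF that(1)]
  proof (elim disjE)
    assume "(u, v) \<in> edges G' \<and> u \<noteq> x \<and> v \<noteq> x \<and> v \<noteq> l"
    thus ?thesis using kept_parent that(2) by blast
  next
    assume "u = p \<and> v = d"
    thus ?thesis using that(2) x_kept_iff_d kept_parent edge_p_x p_ne_x by blast
  qed (use that(2) c_pruned in blast)
  have "card (children G_swap y \<inter> (R - {x})) = card (children G' y \<inter> R)" if "y \<in> R - {x}" for y
  proof (rule card_kept_children_move[OF that parent_x edge_p_x x_kept_iff_d no_edge_p_d])
    have "y \<in> nodes G_swap" using that kept_nodes l_pruned by auto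
    then show "children G_swap y \<inter> (R - {x}) =
        children G' y \<inter> R - {x} \<union> (if y = p \<and> d \<in> R then {d} else {})"
      using children_G_swap d_ne_x l_pruned c_pruned by auto
  qed
  moreover have "nodes G = {y \<in> R - {x}. y = root G' \<or> card (children G' y \<inter> R) \<noteq> 1}"
    using nodes_G x_outside by auto
  ultimately show "nodes G = {y \<in> R - {x}. y = root G' \<or> card (children G_swap y \<inter> (R - {x})) \<noteq> 1}"
    by auto
  show "(a, b) \<in> (edges G_swap)\<^sup>* \<longleftrightarrow> (a, b) \<in> (edges G')\<^sup>*" if "a \<in> nodes G" "b \<in> nodes G" for a b
  proof -
    have "a \<in> R" "b \<in> R" "a \<noteq> x" "b \<noteq> x" using that nodes_G_kept x_outside by auto
    hence "(c, a) \<notin> (edges G')\<^sup>*" "(c, b) \<notin> (edges G')\<^sup>*" "a \<noteq> l" "b \<noteq> l"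
      using below_c_pruned l_pruned by auto
    then show ?thesis using reach_G_swap reach_G_swap_rev \<open>a \<noteq> x\<close> \<open>b \<noteq> x\<close> by auto
  qed
qed simp

lemma dom_\<delta>_swap: "dom \<delta>_swap = dom \<delta> - {x}" unfolding \<delta>_swap_def by auto

lemma losses_G_swap: "losses G G_swap = losses G G' - {l}"
  using locally_similar_leaves[OF locally_similar_G_swap] losses_nodes x_not_loss
  unfolding losses_def by auto

lemma dups_G_swap: "dups G_swap \<rho> = dups G' \<rho> - {x}"
  using locally_similar_dups[OF locally_similar_G_swap] dups_nodes l_not_dup by auto

lemma reconciliation_G_swap: "reconciliation G G_swap S \<phi> \<rho> \<delta>_swap"
proof (rule reconciliationI)
  show "extension G_swap G" by (rule extension_G_swap)
  show "consistent G_swap S \<rho>"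
    using locally_similar_consistent[OF locally_similar_G_swap consistent_G'] .
  show "dom \<delta>_swap \<subseteq> dups G_swap \<rho>" using dom_\<delta> unfolding dom_\<delta>_swap dups_G_swap by blast
  have "l \<notin> ran \<delta>_swap"
    using inj_\<delta> \<delta>_x unfolding \<delta>_swap_def ran_def inj_on_def by (auto simp: domI)
  moreover have "ran \<delta>_swap \<subseteq> ran \<delta>" unfolding \<delta>_swap_def ran_def by auto
  ultimately show "ran \<delta>_swap \<subseteq> losses G G_swap" using ran_\<delta> unfolding losses_G_swap by blast
  show "inj_on \<delta>_swap (dom \<delta>_swap)"
    using inj_\<delta> unfolding dom_\<delta>_swap \<delta>_swap_def inj_on_def by auto
  show "\<forall>y \<in> dom \<delta>_swap. \<rho> y = \<rho> (the (\<delta>_swap y))"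
    using \<rho>_\<delta> unfolding dom_\<delta>_swap \<delta>_swap_def by simp
qed

lemma rcost_G_swap_less: "rcost G G_swap \<rho> \<delta>_swap < rcost G G' \<rho> \<delta>"
proof -
  have "finite (dom \<delta>)" using dom_\<delta> finite_dups finite_subset by blast
  hence "card (dom \<delta>) = Suc (card (dom \<delta>_swap))"
    unfolding dom_\<delta>_swap using \<delta>_x by (intro card_Suc_Diff1[symmetric]) blast+
  moreover have "card (losses G G') = Suc (card (losses G G_swap))"
    unfolding losses_G_swap by (rule card_Suc_Diff1[symmetric, OF finite_losses l_loss])
  moreover have "card (dups G' \<rho>) = Suc (card (dups G_swap \<rho>))"
    unfolding dups_G_swap by (rule card_Suc_Diff1[symmetric, OF finite_dups x_dup])
  ultimately show ?thesis
    using rcost_reconciliation[OF rec] rcost_reconciliation[OF reconciliation_G_swap] by linarith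
qed

end

section \<open>Optimal reconciliations\<close>

lemma (in pruned_reconciliation) cheaper_reconciliation:
  assumes x: "x \<in> dups G' \<rho>" "x \<notin> nodes G"
  shows "\<exists>G2 \<delta>2. reconciliation G G2 S \<phi> \<rho> \<delta>2 \<and> rcost G G2 \<rho> \<delta>2 < rcost G G' \<rho> \<delta>"
proof -
  obtain p where px: "(p, x) \<in> edges G'" using tree_G'(5) dups_nodes dup_not_root x(1) by blast
  obtain c d where cd: "children G' x = {c, d}" "c \<noteq> d" "c \<notin> R" "x \<in> R \<longleftrightarrow> d \<in> R"
    using dup_outside_children[OF x] .
  interpret dup_outside G G' S \<phi> \<rho> \<delta> R x c d p
    using x cd px by unfold_locales
  show ?thesis
  proof (cases "\<delta> x = None \<or> the (\<delta> x) \<in> dropped")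
    case True
    then show ?thesis using reconciliation_G_drop rcost_G_drop_less by blast
  next
    case False
    then obtain l where l: "\<delta> x = Some l" "(c, l) \<notin> (edges G')\<^sup>*" by (auto simp: in_dropped)
    have l_loss: "l \<in> losses G G'" using l(1) ran_\<delta> unfolding ran_def by blast
    show ?thesis
    proof (cases "d \<notin> R \<and> (d, l) \<in> (edges G')\<^sup>*")
      case True
      interpret d_side: dup_outside G G' S \<phi> \<rho> \<delta> R x d c p
        using x cd px True by unfold_locales auto
      have "the (\<delta> x) \<in> d_side.dropped" using l True unfolding d_side.in_dropped by simp
      then show ?thesis using d_side.reconciliation_G_drop d_side.rcost_G_drop_less by blast
    next
      case False
      hence "l \<noteq> d" using loss_pruned[OF l_loss] by blast
      obtain q where "(q, l) \<in> edges G'"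
        using tree_G'(5) losses_nodes l_loss leaf_not_root unfolding losses_def by blast
      interpret dup_paired_outside G G' S \<phi> \<rho> \<delta> R x c d p l q
        using l \<open>l \<noteq> d\<close> \<open>(q, l) \<in> edges G'\<close> by unfold_locales
      show ?thesis using reconciliation_G_swap rcost_G_swap_less by blast
    qed
  qed
qed

theorem lemma12:
  fixes G G' :: "'v rtree" and S :: "'s rtree"
    and \<phi> \<rho> :: "'v \<Rightarrow> 's" and \<delta> :: "'v \<Rightarrow> 'v option"
  assumes "optimal_reconciliation G G' S \<phi> \<rho> \<delta>"
  shows "dups G' \<rho> \<subseteq> nodes G"
proof
  fix x assume x: "x \<in> dups G' \<rho>"
  have rec: "reconciliation G G' S \<phi> \<rho> \<delta>"
    and opt: "\<And>G2 \<delta>2. reconciliation G G2 S \<phi> \<rho> \<delta>2 \<Longrightarrow> rcost G G' \<rho> \<delta> \<le> rcost G G2 \<rho> \<delta>2"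
    using assms unfolding optimal_reconciliation_def by blast+
  obtain R where R: "pruned_reconciliation G G' S \<phi> \<rho> \<delta> R" using reconciliation_pruned[OF rec] .
  show "x \<in> nodes G"
  proof (rule ccontr)
    assume "x \<notin> nodes G"
    then obtain G2 \<delta>2 where "reconciliation G G2 S \<phi> \<rho> \<delta>2" "rcost G G2 \<rho> \<delta>2 < rcost G G' \<rho> \<delta>"
      using pruned_reconciliation.cheaper_reconciliation[OF R x] by blast
    with opt show False by fastforce
  qed
qed

end
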